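(* Let $C\in\mathbb{R}^{d\times d}$ be symmetric positive-definite, $\mu_0=\mathcal{N}(0,C)$, and let $\rho\colon\mathbb{R}^d\to(0,\infty)$ be measurable and bounded away from $0$ and from $\infty$ on every compact subset of $\mathbb{R}^d$. Let $E$ be the transition kernel of elliptical slice sampling for $(\rho,\mu_0)$. Then for every compact set $G\subset\mathbb{R}^d$ there is a constant $\varepsilon>0$ such that $$E(x,A)\ge\varepsilon\,\lambda_G(A)\qquad\text{for all }x\in G\text{ and all Borel }A\subseteq\mathbb{R}^d,$$ where $\lambda_G$ is $d$-dimensional Lebesgue measure restricted to $G$; that is, $G$ is a small set for $E$ with respect to the measure $\varepsilon\lambda_G$.
   Context: For $t\ge0$, $G_t=\{x\in\mathbb{R}^d:\rho(x)\ge t\}$. Let $p(x,w,\theta)=\cos(\theta)x+\sin(\theta)w$. Elliptical slice sampling performs one transition from $x$ as follows: draw $w\sim\mu_0$; draw $t\sim\mathcal{U}[0,\rho(x)]$; draw $\theta\sim\mathcal{U}[0,2\pi]$ and set $\theta_{\min}=\theta-2\pi$, $\theta_{\max}=\theta$; while $p(x,w,\theta)\notin G_t$: if $\theta<0$ set $\theta_{\min}=\theta$, else set $\theta_{\max}=\theta$, and draw a new $\theta\sim\mathcal{U}[\theta_{\min},\theta_{\max}]$; output $y=p(x,w,\theta)$. All draws are independent; $E(x,A)$ is the probability that the output lies in $A$. A set $S$ is small w.r.t. a kernel $P$ and a measure $\nu$ if $P(x,A)\ge\nu(A)$ for all $x\in S$ and Borel $A$. *)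

theory Defs
  imports "HOL-Probability.Probability"
begin

text \<open>Points of R^d are vectors of type real^'d (d = CARD('d)).\<close>

definition sym_pos_def_mat :: "real^'d^'d \<Rightarrow> bool" where
  "sym_pos_def_mat C \<longleftrightarrow> transpose C = C \<and> (\<forall>v. v \<noteq> 0 \<longrightarrow> v \<bullet> (C *v v) > 0)"

definition gauss_density :: "real^'d^'d \<Rightarrow> real^'d \<Rightarrow> real" where
  "gauss_density C x =
     (2 * pi) powr (- real CARD('d) / 2) * (det C) powr (- 1 / 2)
       * exp (- (x \<bullet> (matrix_inv C *v x)) / 2)"

definition gauss_measure :: "real^'d^'d \<Rightarrow> (real^'d) measure" where
  "gauss_measure C = density lborel (\<lambda>x. ennreal (gauss_density C x))"

definition U01 :: "real measure" where
  "U01 = uniform_measure lborel {0..1}"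

definition ess_p :: "real^'d \<Rightarrow> real^'d \<Rightarrow> real \<Rightarrow> real^'d" where
  "ess_p x w \<theta> = cos \<theta> *\<^sub>R x + sin \<theta> *\<^sub>R w"

definition level_set :: "(real^'d \<Rightarrow> real) \<Rightarrow> real \<Rightarrow> (real^'d) set" where
  "level_set \<rho> t = {x. \<rho> x \<ge> t}"

text \<open>Randomness of one ESS transition: w ~ mu0, v ~ U[0,1] (so t = rho(x) v ~ U[0,rho(x)]),
  and an i.i.d. sequence u_0, u_1, ... ~ U[0,1] driving the angle draws.
  theta_0 = 2 pi u_0 ~ U[0,2pi]; a fresh draw theta ~ U[lo,hi] is lo + (hi - lo) u_{k+1}.\<close>
definition ess_space :: "real^'d^'d \<Rightarrow> ((real^'d) \<times> real \<times> (nat \<Rightarrow> real)) measure" where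
  "ess_space C = gauss_measure C \<Otimes>\<^sub>M (U01 \<Otimes>\<^sub>M (\<Pi>\<^sub>M k\<in>(UNIV::nat set). U01))"

fun ess_state :: "(nat \<Rightarrow> real) \<Rightarrow> nat \<Rightarrow> real \<times> real \<times> real" where
  "ess_state u 0 = (2 * pi * u 0, 2 * pi * u 0 - 2 * pi, 2 * pi * u 0)"
| "ess_state u (Suc k) =
     (let (\<theta>, lo, hi) = ess_state u k;
          lo' = (if \<theta> < 0 then \<theta> else lo);
          hi' = (if \<theta> < 0 then hi else \<theta>)
      in (lo' + (hi' - lo') * u (Suc k), lo', hi'))"

definition ess_theta :: "(nat \<Rightarrow> real) \<Rightarrow> nat \<Rightarrow> real" where
  "ess_theta u k = fst (ess_state u k)"

definition ess_hit :: "(real^'d \<Rightarrow> real) \<Rightarrow> real^'d \<Rightarrow> (real^'d) \<times> real \<times> (nat \<Rightarrow> real) \<Rightarrow> nat \<Rightarrow> bool" where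
  "ess_hit \<rho> x \<omega> k = (case \<omega> of (w, v, u) \<Rightarrow>
      ess_p x w (ess_theta u k) \<in> level_set \<rho> (\<rho> x * v))"

definition ess_output :: "(real^'d \<Rightarrow> real) \<Rightarrow> real^'d \<Rightarrow> (real^'d) \<times> real \<times> (nat \<Rightarrow> real) \<Rightarrow> real^'d" where
  "ess_output \<rho> x \<omega> = (case \<omega> of (w, v, u) \<Rightarrow>
      ess_p x w (ess_theta u (LEAST k. ess_hit \<rho> x \<omega> k)))"

text \<open>Transition kernel E(x,A): probability that the loop terminates and the output lies in A
  (the loop terminates almost surely, so this is the probability that the output lies in A).\<close>
definition ess_kernel :: "real^'d^'d \<Rightarrow> (real^'d \<Rightarrow> real) \<Rightarrow> real^'d \<Rightarrow> (real^'d) set \<Rightarrow> real" where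
  "ess_kernel C \<rho> x A =
     measure (ess_space C) {\<omega> \<in> space (ess_space C).
        (\<exists>k. ess_hit \<rho> x \<omega> k) \<and> ess_output \<rho> x \<omega> \<in> A}"

end

theory Submission
  imports Defs
begin

(* The bound comes from the event that the very first proposal of the shrinkage loop is
   accepted.  On the compact set G we have a \<le> \<rho> \<le> b, so if the slice level t = \<rho>(x) v
   satisfies v \<le> a / b, every proposal landing in G is accepted.  If moreover the first
   angle lies in [\<pi>/6, 5\<pi>/6] (probability 1/3), the proposal w \<mapsto> cos \<theta> x + sin \<theta> w is an
   affine map with ratio sin \<theta> \<in> [1/2, 1]: the preimage of A \<inter> G has Lebesgue measure at
   least that of A \<inter> G and lies in a fixed ball, on which the Gaussian density is bounded
   below by some \<delta> > 0.  Integrating over (v, \<theta>) gives E(x, A) \<ge> \<delta> (a / b) / 3 \<cdot> \<lambda>(A \<inter> G). *)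

lemma matrix_inv_invertible:
  fixes A :: "'a::semiring_1^'n^'n"
  assumes "invertible A"
  shows "A ** matrix_inv A = mat 1" "matrix_inv A ** A = mat 1"
proof -
  have "A ** matrix_inv A = mat 1 \<and> matrix_inv A ** A = mat 1"
    using assms unfolding invertible_def matrix_inv_def by (rule someI_ex)
  then show "A ** matrix_inv A = mat 1" "matrix_inv A ** A = mat 1" by auto
qed

lemma sym_pos_def_mat_invertible:
  fixes C :: "real^'d^'d"
  assumes "sym_pos_def_mat C"
  shows "invertible C"
proof -
  have "C *v x = 0 \<Longrightarrow> x = 0" for x
    using assms unfolding sym_pos_def_mat_def by (metis inner_zero_right less_irrefl)
  then show ?thesis
    unfolding invertible_left_inverse matrix_left_invertible_ker by blast
qed

lemma sym_pos_def_mat_inverse_pos: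
  fixes C :: "real^'d^'d"
  assumes C: "sym_pos_def_mat C" and "x \<noteq> 0"
  shows "x \<bullet> (matrix_inv C *v x) > 0"
proof -
  define y where "y = matrix_inv C *v x"
  have "C *v y = x"
    using matrix_inv_invertible(1)[OF sym_pos_def_mat_invertible[OF C]]
    by (simp add: y_def matrix_vector_mul_assoc)
  moreover have "y \<noteq> 0" using \<open>C *v y = x\<close> \<open>x \<noteq> 0\<close> by auto
  ultimately show ?thesis
    using C unfolding sym_pos_def_mat_def by (metis inner_commute y_def)
qed

lemma sym_pos_def_mat_inverse_coercive:
  fixes C :: "real^'d^'d"
  assumes C: "sym_pos_def_mat C"
  obtains l where "l > 0" "\<And>x. l * (norm x)\<^sup>2 \<le> x \<bullet> (matrix_inv C *v x)"
proof -
  let ?q = "\<lambda>x::real^'d. x \<bullet> (matrix_inv C *v x)"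
  have "continuous_on (sphere 0 1) ?q"
    by (intro continuous_intros linear_continuous_on matrix_vector_mul_linear)
  moreover have "sphere (0::real^'d) 1 \<noteq> {}" by simp
  ultimately obtain u where u: "u \<in> sphere 0 1" "\<And>y. y \<in> sphere 0 1 \<Longrightarrow> ?q u \<le> ?q y"
    using continuous_attains_inf[OF compact_sphere] by blast
  have "?q u * (norm x)\<^sup>2 \<le> ?q x" for x
  proof (cases "x = 0")
    case False
    have "?q x = (norm x)\<^sup>2 * ?q (x /\<^sub>R norm x)"
      using False by (simp add: matrix_vector_mult_scaleR power2_eq_square field_simps)
    moreover have "?q u \<le> ?q (x /\<^sub>R norm x)" using False by (intro u(2)) simp
    ultimately show ?thesis by (metis mult.commute mult_right_mono zero_le_power2)
  qed simp
  moreover have "?q u > 0" using u(1) by (intro sym_pos_def_mat_inverse_pos[OF C]) auto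
  ultimately show ?thesis using that by blast
qed

lemma nn_integral_exp_neg_sq_finite:
  fixes l :: real
  assumes "l > 0"
  shows "(\<integral>\<^sup>+t. ennreal (exp (- l * t\<^sup>2)) \<partial>lborel) < \<infinity>"
proof -
  define \<sigma> where "\<sigma> = 1 / sqrt (2 * l)"
  have \<sigma>: "\<sigma> > 0" using assms by (simp add: \<sigma>_def)
  have "exp (- l * t\<^sup>2) = sqrt (2 * pi * \<sigma>\<^sup>2) * normal_density 0 \<sigma> t" for t
    using assms by (simp add: normal_density_def \<sigma>_def real_sqrt_divide power_divide)
  then have "(\<integral>\<^sup>+t. ennreal (exp (- l * t\<^sup>2)) \<partial>lborel)
      = ennreal (sqrt (2 * pi * \<sigma>\<^sup>2)) * (\<integral>\<^sup>+t. ennreal (normal_density 0 \<sigma> t) \<partial>lborel)"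
    by (simp add: ennreal_mult nn_integral_cmult)
  also have "(\<integral>\<^sup>+t. ennreal (normal_density 0 \<sigma> t) \<partial>lborel) = 1"
    using prob_space.emeasure_space_1[OF prob_space_normal_density[OF \<sigma>, of 0]]
    by (simp add: emeasure_density)
  finally show ?thesis by simp
qed

lemma nn_integral_exp_neg_norm_sq_finite:
  fixes l :: real
  assumes "l > 0"
  shows "(\<integral>\<^sup>+(x::'a::euclidean_space). ennreal (exp (- l * (norm x)\<^sup>2)) \<partial>lborel) < \<infinity>"
proof -
  have "(norm x)\<^sup>2 = (\<Sum>b\<in>Basis. (x \<bullet> b)\<^sup>2)" for x :: 'a
    unfolding power2_norm_eq_inner by (subst euclidean_inner) (simp add: power2_eq_square)
  then have "exp (- l * (norm x)\<^sup>2) = (\<Prod>b\<in>Basis. exp (- l * (x \<bullet> b)\<^sup>2))" for x :: 'a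
    by (simp add: exp_sum[symmetric] sum_distrib_left)
  then have "(\<integral>\<^sup>+(x::'a). ennreal (exp (- l * (norm x)\<^sup>2)) \<partial>lborel)
      = (\<integral>\<^sup>+(x::'a). (\<Prod>b\<in>Basis. ennreal (exp (- l * (x \<bullet> b)\<^sup>2))) \<partial>lborel)"
    by (simp add: prod_ennreal)
  also have "\<dots> = (\<Prod>b\<in>(Basis::'a set). \<integral>\<^sup>+t. ennreal (exp (- l * t\<^sup>2)) \<partial>lborel)"
    by (rule nn_integral_lborel_prod) auto
  also have "\<dots> < \<infinity>"
    using nn_integral_exp_neg_sq_finite[OF assms] by (simp add: power_less_top_ennreal)
  finally show ?thesis .
qed

lemma gauss_density_pos:
  fixes C :: "real^'d^'d"
  assumes "sym_pos_def_mat C"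
  shows "gauss_density C x > 0"
proof -
  have "det C \<noteq> 0"
    using sym_pos_def_mat_invertible[OF assms] invertible_det_nz by blast
  \<comment> \<open>\<open>powr\<close> is positive at every nonzero base, so the sign of \<open>det C\<close> does not matter\<close>
  then show ?thesis by (simp add: gauss_density_def)
qed

lemma continuous_gauss_density: "continuous_on UNIV (gauss_density C)"
  unfolding gauss_density_def[abs_def]
  by (intro continuous_intros linear_continuous_on matrix_vector_mul_linear) auto

lemma borel_measurable_gauss_density[measurable]: "gauss_density C \<in> borel_measurable borel"
  by (rule borel_measurable_continuous_onI[OF continuous_gauss_density])

lemma sets_gauss_measure[measurable_cong]: "sets (gauss_measure C) = sets borel"
  by (simp add: gauss_measure_def)

lemma finite_measure_gauss_measure:
  fixes C :: "real^'d^'d"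
  assumes C: "sym_pos_def_mat C"
  shows "finite_measure (gauss_measure C)"
proof -
  obtain l where l: "l > 0" "\<And>x. l * (norm x)\<^sup>2 \<le> x \<bullet> (matrix_inv C *v x)"
    using sym_pos_def_mat_inverse_coercive[OF C] by blast
  define K where "K = (2 * pi) powr (- real CARD('d) / 2) * (det C) powr (- 1 / 2)"
  have "K \<ge> 0" by (simp add: K_def)
  have bound: "gauss_density C x \<le> K * exp (- (l / 2) * (norm x)\<^sup>2)" for x
    using l(2)[of x] \<open>K \<ge> 0\<close> unfolding gauss_density_def K_def[symmetric]
    by (intro mult_left_mono) auto
  have "emeasure (gauss_measure C) UNIV = (\<integral>\<^sup>+x. ennreal (gauss_density C x) \<partial>lborel)"
    by (simp add: gauss_measure_def emeasure_density)
  also have "\<dots> \<le> (\<integral>\<^sup>+(x::real^'d). ennreal K * ennreal (exp (- (l / 2) * (norm x)\<^sup>2)) \<partial>lborel)"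
    using bound \<open>K \<ge> 0\<close> by (intro nn_integral_mono) (simp add: ennreal_mult[symmetric] ennreal_leI)
  also have "\<dots> = ennreal K * (\<integral>\<^sup>+(x::real^'d). ennreal (exp (- (l / 2) * (norm x)\<^sup>2)) \<partial>lborel)"
    by (simp add: nn_integral_cmult)
  also have "\<dots> < \<infinity>"
    using nn_integral_exp_neg_norm_sq_finite[where 'a="real^'d", of "l / 2"] l(1) by (simp add: ennreal_mult_less_top)
  finally show ?thesis
    by (intro finite_measureI) (simp add: gauss_measure_def)
qed

lemma compact_continuous_pos_bounded_below:
  fixes f :: "'a::topological_space \<Rightarrow> real"
  assumes "compact K" "continuous_on K f" "\<And>x. x \<in> K \<Longrightarrow> f x > 0"
  obtains \<delta> where "\<delta> > 0" "\<And>x. x \<in> K \<Longrightarrow> \<delta> \<le> f x"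
proof (cases "K = {}")
  case False
  then obtain u where "u \<in> K" "\<And>x. x \<in> K \<Longrightarrow> f u \<le> f x"
    using continuous_attains_inf[OF assms(1) _ assms(2)] by blast
  then show ?thesis using that assms(3) by blast
next
  case True
  then show ?thesis using that[of 1] by simp
qed

lemma emeasure_lborel_affine_preimage:
  fixes t :: "'a::euclidean_space"
  assumes "s \<noteq> 0" "B \<in> sets borel"
  shows "emeasure lborel B = ennreal (\<bar>s\<bar> ^ DIM('a)) * emeasure lborel {w. t + s *\<^sub>R w \<in> B}"
proof -
  have "emeasure lborel B
      = emeasure (density (distr lborel borel (\<lambda>w. t + s *\<^sub>R w)) (\<lambda>_. \<bar>s\<bar> ^ DIM('a))) B"
    using lborel_affine[OF assms(1), of t] by simp
  also have "\<dots> = ennreal (\<bar>s\<bar> ^ DIM('a)) * emeasure lborel {w. t + s *\<^sub>R w \<in> B}"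
    using assms(2) by (simp add: emeasure_density nn_integral_cmult emeasure_distr vimage_def)
  finally show ?thesis .
qed

lemma emeasure_density_affine_preimage_ge:
  fixes f :: "'a::euclidean_space \<Rightarrow> real"
  assumes [measurable]: "f \<in> borel_measurable borel" "B \<in> sets borel"
    and s: "s \<noteq> 0" "\<bar>s\<bar> \<le> 1"
    and "{w. t + s *\<^sub>R w \<in> B} \<subseteq> K" "\<And>w. w \<in> K \<Longrightarrow> \<delta> \<le> f w"
  shows "ennreal \<delta> * emeasure lborel B \<le> emeasure (density lborel f) {w. t + s *\<^sub>R w \<in> B}"
proof -
  let ?T = "{w. t + s *\<^sub>R w \<in> B}"
  have [measurable]: "?T \<in> sets borel" by measurable
  have "ennreal (\<bar>s\<bar> ^ DIM('a)) \<le> 1"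
    using s by (simp add: power_le_one)
  then have "emeasure lborel B \<le> emeasure lborel ?T"
    using emeasure_lborel_affine_preimage[OF s(1) assms(2), of t]
      mult_right_mono[of _ 1 "emeasure lborel ?T"] by simp
  then have "ennreal \<delta> * emeasure lborel B \<le> (\<integral>\<^sup>+w. ennreal \<delta> * indicator ?T w \<partial>lborel)"
    by (simp add: nn_integral_cmult mult_left_mono)
  also have "\<dots> \<le> (\<integral>\<^sup>+w. ennreal (f w) * indicator ?T w \<partial>lborel)"
    using assms(5,6) by (intro nn_integral_mono) (auto split: split_indicator intro!: ennreal_leI)
  also have "\<dots> = emeasure (density lborel f) ?T"
    by (simp add: emeasure_density)
  finally show ?thesis .
qed

lemma (in pair_sigma_finite) emeasure_pair_measure_ge_slices:
  assumes "E \<in> sets (M1 \<Otimes>\<^sub>M M2)" "J \<in> sets M2"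
    and "\<And>y. y \<in> J \<Longrightarrow> r \<le> emeasure M1 ((\<lambda>x. (x, y)) -` E)"
  shows "r * emeasure M2 J \<le> emeasure (M1 \<Otimes>\<^sub>M M2) E"
proof -
  have "r * emeasure M2 J = (\<integral>\<^sup>+y. r * indicator J y \<partial>M2)"
    using assms(2) by (simp add: nn_integral_cmult_indicator)
  also have "\<dots> \<le> (\<integral>\<^sup>+y. emeasure M1 ((\<lambda>x. (x, y)) -` E) \<partial>M2)"
    using assms(3) by (intro nn_integral_mono) (auto split: split_indicator)
  also have "\<dots> = emeasure (M1 \<Otimes>\<^sub>M M2) E"
    using assms(1) by (rule emeasure_pair_measure_alt2[symmetric])
  finally show ?thesis .
qed

lemma emeasure_PiM_component_preimage:
  assumes "\<And>i. i \<in> I \<Longrightarrow> prob_space (M i)" "i \<in> I" "X \<in> sets (M i)"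
  shows "emeasure (Pi\<^sub>M I M) {\<omega> \<in> space (Pi\<^sub>M I M). \<omega> i \<in> X} = emeasure (M i) X"
proof -
  have "emeasure (M i) X = emeasure (distr (Pi\<^sub>M I M) (M i) (\<lambda>\<omega>. \<omega> i)) X"
    using distr_PiM_component[of I M i] assms(1,2) by simp
  also have "\<dots> = emeasure (Pi\<^sub>M I M) {\<omega> \<in> space (Pi\<^sub>M I M). \<omega> i \<in> X}"
    using assms(2,3) by (subst emeasure_distr) (auto simp: vimage_def Int_def conj_commute)
  finally show ?thesis ..
qed

lemma sin_ge_half:
  assumes "pi / 6 \<le> t" "t \<le> 5 * pi / 6"
  shows "1 / 2 \<le> sin t"
proof (cases "t \<le> pi / 2")
  case True
  then have "sin (pi / 6) \<le> sin t" using assms by (intro sin_monotone_2pi_le) auto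
  then show ?thesis by (simp add: sin_30)
next
  case False
  then have "sin (pi / 6) \<le> sin (pi - t)" using assms by (intro sin_monotone_2pi_le) auto
  then show ?thesis by (simp add: sin_30)
qed

lemma emeasure_gauss_proposal_ge:
  fixes C :: "real^'d^'d" and x :: "real^'d"
  assumes "1 / 2 \<le> sin \<theta>" "B \<in> sets borel" "B \<subseteq> cball 0 R" "x \<in> cball 0 R"
    and \<delta>: "\<And>w. w \<in> cball 0 (4 * R) \<Longrightarrow> \<delta> \<le> gauss_density C w"
  shows "ennreal \<delta> * emeasure lborel B \<le> emeasure (gauss_measure C) {w. ess_p x w \<theta> \<in> B}"
proof -
  have "{w. cos \<theta> *\<^sub>R x + sin \<theta> *\<^sub>R w \<in> B} \<subseteq> cball 0 (4 * R)"
  proof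
    fix w assume "w \<in> {w. cos \<theta> *\<^sub>R x + sin \<theta> *\<^sub>R w \<in> B}"
    then have "norm (cos \<theta> *\<^sub>R x + sin \<theta> *\<^sub>R w) \<le> R" using assms(3) by auto
    moreover have "norm (cos \<theta> *\<^sub>R x) \<le> R"
      using assms(4) abs_cos_le_one[of \<theta>] mult_mono[of "\<bar>cos \<theta>\<bar>" 1 "norm x" R] by simp
    ultimately have "norm (sin \<theta> *\<^sub>R w) \<le> 2 * R"
      using norm_triangle_ineq4[of "cos \<theta> *\<^sub>R x + sin \<theta> *\<^sub>R w" "cos \<theta> *\<^sub>R x"] by simp
    then show "w \<in> cball 0 (4 * R)"
      using assms(1) mult_right_mono[OF assms(1) norm_ge_zero[of w]] by simp
  qed
  moreover have "sin \<theta> \<noteq> 0" "\<bar>sin \<theta>\<bar> \<le> 1" using assms(1) by auto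
  ultimately show ?thesis
    unfolding ess_p_def gauss_measure_def using assms(2) \<delta>
    by (intro emeasure_density_affine_preimage_ge) auto
qed

lemma sets_U01[measurable_cong]: "sets U01 = sets borel"
  by (simp add: U01_def)

lemma prob_space_U01: "prob_space U01"
  unfolding U01_def by (rule prob_space_uniform_measure) auto

lemma emeasure_U01_atLeastAtMost:
  assumes "0 \<le> a" "a \<le> b" "b \<le> 1"
  shows "emeasure U01 {a..b} = ennreal (b - a)"
  using assms by (simp add: U01_def Int_absorb2 divide_ennreal_def)

lemma emeasure_U01_atMost:
  assumes "0 \<le> c" "c \<le> 1"
  shows "emeasure U01 {..c} = ennreal c"
proof -
  have "{..c} \<inter> {0..1} = {0..c}" using assms by auto
  then show ?thesis using assms by (simp add: U01_def Int_commute divide_ennreal_def)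
qed

lemma space_ess_space: "space (ess_space C) = UNIV"
  by (simp add: ess_space_def space_pair_measure space_PiM gauss_measure_def U01_def)

lemma sets_ess_space[measurable_cong]:
  "sets (ess_space C) = sets (borel \<Otimes>\<^sub>M borel \<Otimes>\<^sub>M (\<Pi>\<^sub>M k\<in>(UNIV::nat set). U01))"
  unfolding ess_space_def by (intro sets_pair_measure_cong) (simp_all add: sets_gauss_measure sets_U01)

lemma finite_measure_ess_space:
  assumes "sym_pos_def_mat C"
  shows "finite_measure (ess_space C)"
proof -
  interpret prob_space "U01 \<Otimes>\<^sub>M (\<Pi>\<^sub>M k\<in>(UNIV::nat set). U01)"
    by (intro prob_space_pair prob_space_PiM prob_space_U01)
  show ?thesis
    unfolding ess_space_def
    by (intro finite_measure_pair_measure finite_measure_gauss_measure assms finite_measure_axioms)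
qed

lemma measurable_ess_state[measurable]:
  "(\<lambda>u. ess_state u k) \<in> (\<Pi>\<^sub>M k\<in>(UNIV::nat set). U01) \<rightarrow>\<^sub>M borel \<Otimes>\<^sub>M borel \<Otimes>\<^sub>M borel"
proof (induction k)
  case (Suc k)
  note [measurable] = Suc
  show ?case unfolding ess_state.simps Let_def case_prod_beta by measurable
qed simp

lemma measurable_ess_theta[measurable]:
  "(\<lambda>u. ess_theta u k) \<in> borel_measurable (\<Pi>\<^sub>M k\<in>(UNIV::nat set). U01)"
  unfolding ess_theta_def by measurable

lemma measurable_ess_hit[measurable]:
  assumes [measurable]: "\<rho> \<in> borel_measurable borel"
  shows "Measurable.pred (ess_space C) (\<lambda>\<omega>. ess_hit \<rho> x \<omega> k)"
  unfolding ess_hit_def case_prod_beta level_set_def ess_p_def by measurable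

lemma measurable_ess_output[measurable]:
  assumes [measurable]: "\<rho> \<in> borel_measurable borel"
  shows "ess_output \<rho> x \<in> borel_measurable (ess_space C)"
proof -
  have "(\<lambda>\<omega>. ess_p x (fst \<omega>) (ess_theta (snd (snd \<omega>)) (LEAST k. ess_hit \<rho> x \<omega> k)))
      \<in> borel_measurable (ess_space C)"
    by (rule measurable_compose_countable'[where I=UNIV])
      (auto simp: ess_p_def intro!: measurable_Least)
  then show ?thesis unfolding ess_output_def case_prod_beta .
qed

lemma ess_output_first_hit:
  assumes "ess_hit \<rho> x (w, v, u) 0"
  shows "ess_output \<rho> x (w, v, u) = ess_p x w (2 * pi * u 0)"
  using assms by (simp add: ess_output_def ess_theta_def Least_eq_0)

lemma emeasure_ess_first_proposal_ge:
  fixes C :: "real^'d^'d" and x :: "real^'d"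
  assumes C: "sym_pos_def_mat C" and [measurable]: "B \<in> sets borel"
    and "B \<subseteq> cball 0 R" "x \<in> cball 0 R" "0 \<le> c" "c \<le> 1" "0 \<le> \<delta>"
    and "\<And>w. w \<in> cball 0 (4 * R) \<Longrightarrow> \<delta> \<le> gauss_density C w"
  shows "ennreal (\<delta> * c / 3) * emeasure lborel B
    \<le> emeasure (ess_space C)
         {(w, v, u). v \<le> c \<and> u 0 \<in> {1/12..5/12} \<and> ess_p x w (2 * pi * u 0) \<in> B}"
    (is "_ \<le> emeasure _ ?E")
proof -
  let ?U = "\<Pi>\<^sub>M k\<in>(UNIV::nat set). U01"
  let ?I = "{u \<in> space ?U. u 0 \<in> {1/12..5/12}}"
  interpret U: prob_space ?U by (intro prob_space_PiM prob_space_U01)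
  interpret VU: prob_space "U01 \<Otimes>\<^sub>M ?U" by (intro prob_space_pair prob_space_U01 U.prob_space_axioms)
  interpret gauss: finite_measure "gauss_measure C" by (rule finite_measure_gauss_measure[OF C])
  interpret gauss_VU: pair_sigma_finite "gauss_measure C" "U01 \<Otimes>\<^sub>M ?U" ..
  have "{\<omega> \<in> space (ess_space C). fst (snd \<omega>) \<le> c \<and> snd (snd \<omega>) 0 \<in> {1/12..5/12} \<and>
      ess_p x (fst \<omega>) (2 * pi * snd (snd \<omega>) 0) \<in> B} \<in> sets (ess_space C)"
    unfolding ess_p_def by measurable
  then have E: "?E \<in> sets (ess_space C)"
    by (simp add: space_ess_space case_prod_unfold)
  have I: "?I \<in> sets ?U" by measurable
  have "emeasure ?U ?I = ennreal (1 / 3)"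
    using emeasure_PiM_component_preimage[of UNIV "\<lambda>_. U01" 0 "{1/12..5/12}"]
      emeasure_U01_atLeastAtMost[of "1/12" "5/12"] prob_space_U01 by simp
  then have "emeasure (U01 \<Otimes>\<^sub>M ?U) ({..c} \<times> ?I) = ennreal (c / 3)"
    using assms(5,6) I by (simp add: U.emeasure_pair_measure_Times emeasure_U01_atMost ennreal_mult[symmetric])
  moreover have "ennreal \<delta> * emeasure lborel B \<le> emeasure (gauss_measure C) ((\<lambda>w. (w, y)) -` ?E)"
    if y_in: "y \<in> {..c} \<times> ?I" for y
  proof -
    obtain v u where y: "y = (v, u)" "v \<le> c" "u 0 \<in> {1/12..5/12}" using y_in by auto
    then have "1 / 2 \<le> sin (2 * pi * u 0)" by (intro sin_ge_half) auto
    then show ?thesis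
      using emeasure_gauss_proposal_ge[OF _ assms(2-4) assms(8)] y by simp
  qed
  then have "ennreal \<delta> * emeasure lborel B * emeasure (U01 \<Otimes>\<^sub>M ?U) ({..c} \<times> ?I)
      \<le> emeasure (ess_space C) ?E"
    using E I unfolding ess_space_def by (intro gauss_VU.emeasure_pair_measure_ge_slices) auto
  ultimately show ?thesis
    using ennreal_mult[of \<delta> "c / 3"] assms(5,7) by (simp add: mult_ac)
qed

lemma ess_kernel_ge_first_proposal:
  fixes C :: "real^'d^'d" and \<rho> :: "real^'d \<Rightarrow> real" and x :: "real^'d"
  assumes C: "sym_pos_def_mat C" and [measurable]: "\<rho> \<in> borel_measurable borel"
    and [measurable]: "A \<in> sets borel" "G \<in> sets borel"
    and G: "G \<subseteq> cball 0 R" and x: "x \<in> cball 0 R"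
    and \<rho>: "0 \<le> \<rho> x" "\<And>y. y \<in> G \<Longrightarrow> a \<le> \<rho> y"
    and c: "0 \<le> c" "c \<le> 1" "\<rho> x * c \<le> a"
    and \<delta>: "0 \<le> \<delta>" "\<And>w. w \<in> cball 0 (4 * R) \<Longrightarrow> \<delta> \<le> gauss_density C w"
  shows "\<delta> * c / 3 * measure lborel (A \<inter> G) \<le> ess_kernel C \<rho> x A"
proof -
  let ?E = "{(w, v, u). v \<le> c \<and> u (0::nat) \<in> {1/12..5/12} \<and> ess_p x w (2 * pi * u 0) \<in> A \<inter> G}"
  let ?S = "{\<omega> \<in> space (ess_space C). (\<exists>k. ess_hit \<rho> x \<omega> k) \<and> ess_output \<rho> x \<omega> \<in> A}"
  interpret finite_measure "ess_space C" by (rule finite_measure_ess_space[OF C])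
  have "?E \<subseteq> ?S"
  proof
    fix \<omega> assume "\<omega> \<in> ?E"
    then obtain w v u where \<omega>: "\<omega> = (w, v, u)" and "v \<le> c"
      and p: "ess_p x w (2 * pi * u 0) \<in> A \<inter> G" by auto
    have "\<rho> x * v \<le> \<rho> x * c" using \<open>v \<le> c\<close> \<rho>(1) by (rule mult_left_mono)
    also have "\<dots> \<le> \<rho> (ess_p x w (2 * pi * u 0))" using c(3) \<rho>(2) p by force
    finally have "ess_hit \<rho> x (w, v, u) 0"
      by (simp add: ess_hit_def level_set_def ess_theta_def)
    then show "\<omega> \<in> ?S"
      using \<omega> p ess_output_first_hit[of \<rho> x w v u] by (auto simp: space_ess_space)
  qed
  moreover have "?S \<in> sets (ess_space C)" by measurable
  ultimately have "emeasure (ess_space C) ?E \<le> emeasure (ess_space C) ?S"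
    by (rule emeasure_mono)
  moreover have "ennreal (\<delta> * c / 3) * emeasure lborel (A \<inter> G) \<le> emeasure (ess_space C) ?E"
    using G by (intro emeasure_ess_first_proposal_ge[OF C _ _ x c(1,2) \<delta>]) auto
  moreover have "emeasure lborel (A \<inter> G) = measure lborel (A \<inter> G)"
  proof (rule emeasure_eq_ennreal_measure)
    have "bounded (A \<inter> G)" using G by (blast intro: bounded_subset[OF bounded_cball])
    then show "emeasure lborel (A \<inter> G) \<noteq> \<top>" using emeasure_bounded_finite by force
  qed
  ultimately show ?thesis
    using \<delta>(1) c(1) by (simp add: ess_kernel_def emeasure_eq_measure ennreal_mult[symmetric])
qed

theorem lemma2:
  fixes C :: "real^'d^'d" and \<rho> :: "real^'d \<Rightarrow> real" and G :: "(real^'d) set"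
  assumes "sym_pos_def_mat C"
    and "\<rho> \<in> borel_measurable borel"
    and "\<forall>x. \<rho> x > 0"
    and "\<forall>K. compact K \<longrightarrow> (\<exists>a b. 0 < a \<and> (\<forall>x\<in>K. a \<le> \<rho> x \<and> \<rho> x \<le> b))"
    and "compact G"
  shows "\<exists>\<epsilon>>0. \<forall>x\<in>G. \<forall>A\<in>sets borel.
           ess_kernel C \<rho> x A \<ge> \<epsilon> * measure lborel (A \<inter> G)"
proof -
  obtain a b where "0 < a" and ab: "\<And>x. x \<in> G \<Longrightarrow> a \<le> \<rho> x \<and> \<rho> x \<le> b"
    using assms(4)[rule_format, OF assms(5)] by blast
  obtain R where "\<forall>x\<in>G. norm x \<le> R"
    using compact_imp_bounded[OF assms(5)] bounded_iff by blast
  then have G: "G \<subseteq> cball 0 R" by auto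
  have "continuous_on (cball 0 (4 * R)) (gauss_density C)"
    using continuous_gauss_density by (rule continuous_on_subset) simp
  then obtain \<delta> where "\<delta> > 0" and \<delta>: "\<And>w. w \<in> cball 0 (4 * R) \<Longrightarrow> \<delta> \<le> gauss_density C w"
    using compact_continuous_pos_bounded_below[OF compact_cball] gauss_density_pos[OF assms(1)]
    by blast
  define c where "c = a / max a b"
  have c: "0 \<le> c" "c \<le> 1" "c > 0" using \<open>0 < a\<close> by (auto simp: c_def)
  have \<rho>c: "\<rho> x * c \<le> a" if "x \<in> G" for x
  proof -
    have "\<rho> x * c \<le> max a b * c" using ab[OF that] c(1) by (intro mult_right_mono) auto
    also have "\<dots> = a" using \<open>0 < a\<close> by (simp add: c_def)
    finally show ?thesis .
  qed
  have "\<delta> * c / 3 * measure lborel (A \<inter> G) \<le> ess_kernel C \<rho> x A"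
    if x: "x \<in> G" and A: "A \<in> sets borel" for x A
    using ess_kernel_ge_first_proposal[OF assms(1,2) A borel_compact[OF assms(5)] G _ _ _ c(1,2)
        \<rho>c[OF x] less_imp_le[OF \<open>\<delta> > 0\<close>] \<delta>] G x ab assms(3)
    by (simp add: less_imp_le subset_iff)
  then show ?thesis
    using \<open>\<delta> > 0\<close> c(3) by (intro exI[of _ "\<delta> * c / 3"]) auto
qed

end
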